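(* Let $a>0$ and $n,k$ be integers with $1\le k\le n/2$, and put $u_0=a/k$. Let $a_0,\dots,a_n$ be integers. (A) Suppose there is a prime $p\ge k+2$ with $p\mid\prod_{i=1}^{k}(a+n-k+i)$, $p\nmid a_0a_n$, and $p\nmid\prod_{i=1}^{k}(a+i)$, and suppose that either $p\ge\min(2u_0,\,k+u_0)$, or ($p>2k$ and $p^2-p\ge a$). Then $f_{n,a}(x)$ has no factor of degree $k$ in $\mathbb{Q}[x]$. (B) Suppose there is a prime $p\ge k+2$ with $p\mid\prod_{i=1}^{k}(n-k+i)(a+n-k+i)$ and $p\nmid\prod_{i=1}^{k}(a+i)$, and suppose that either $p\ge\min(2u_0,\,k+u_0)$, or ($p>2k$ and $p^2-p\ge a$). Then $L_n^{(a)}(x)$ has no factor of degree $k$ in $\mathbb{Q}[x]$.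
   Context: Here $a$ is an integer. For integers $n\ge 1$, $a\ge 0$ and integers $a_0,\dots,a_n$, $f_{n,a}(x)=\sum_{j=0}^{n} a_j\frac{x^j}{(j+a)!}$. The generalised Laguerre polynomial is $L_n^{(\alpha)}(x)=\sum_{j=0}^{n}\frac{(n+\alpha)(n-1+\alpha)\cdots(j+1+\alpha)}{(n-j)!\,j!}(-x)^j$. *)

theory Defs
  imports "HOL-Computational_Algebra.Computational_Algebra"
begin

definition fna :: "nat \<Rightarrow> nat \<Rightarrow> (nat \<Rightarrow> int) \<Rightarrow> rat poly" where
  "fna n a c = (\<Sum>j\<le>n. monom (of_int (c j) / fact (j + a)) j)"

definition laguerre :: "nat \<Rightarrow> int \<Rightarrow> rat poly" where
  "laguerre n \<alpha> = (\<Sum>j\<le>n. monom ((\<Prod>i\<in>{j+1..n}. of_int (int i + \<alpha>))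
        / (fact (n - j) * fact j) * (-1) ^ j) j)"

end

theory Submission
  imports Defs
begin

text \<open>After clearing denominators both polynomials become integer polynomials
  \<open>F = \<Sum>\<^sub>j\<^sub>\<le>\<^sub>n e\<^sub>j T\<^sub>j x\<^sup>j\<close> with \<open>T\<^sub>j = (a + j + 1) \<cdots> (a + n)\<close>, where \<open>p\<close> divides neither \<open>e\<^sub>0\<close> nor \<open>e\<^sub>n\<close>
  but divides every coefficient of index at most \<open>n - k\<close> (through a factor of \<open>T\<^sub>j\<close>, or for the Laguerre polynomial
  through \<open>(n choose j) T\<^sub>j\<close>). Legendre's formula and the hypotheses on \<open>p\<close> give
  \<open>k v\<^sub>p((a + 1) \<cdots> (a + j)) < j\<close> for \<open>j \<ge> 1\<close>: every point \<open>(j, v\<^sub>p(F\<^sub>j))\<close> with \<open>j \<ge> 1\<close> lies strictly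
  above the line of slope \<open>-1/k\<close> through \<open>(0, v\<^sub>p(F\<^sub>0))\<close>.

  For the weight \<open>\<alpha> v\<^sub>p(P\<^sub>i) + i\<close> the largest index of minimal weight is additive under multiplication.
  With \<open>\<alpha> = k\<close> this forces the constant term of a factor \<open>G\<close> of degree \<open>k\<close> to have the least
  valuation among the coefficients of \<open>G\<close>; with \<open>\<alpha> > n\<close> it then yields an index \<open>\<le> n - k\<close> at which
  \<open>F\<close> has valuation at most \<open>v\<^sub>p(F\<^sub>n) = 0\<close>, a contradiction.\<close>

lemma fact_add_eq_fact_mult_pochhammer:
  "fact (m + j) = (fact m :: 'a::{semiring_char_0, comm_semiring_1}) * pochhammer (of_nat m + 1) j"
  by (metis pochhammer_fact pochhammer_product' add.commute)

lemma prod_atLeastAtMost_eq_pochhammer: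
  "m \<le> n \<Longrightarrow> (\<Prod>i\<in>{m+1..n}. a + i) = pochhammer (a + m + 1) (n - m)"
  for a m n :: nat
  by (induction n) (auto simp: pochhammer_Suc le_Suc_eq Suc_diff_le)

lemma of_nat_pochhammer_eq_fact_div:
  "m \<le> n \<Longrightarrow> (of_nat (pochhammer (m + 1) (n - m)) :: 'a::field_char_0) = fact n / fact m"
  using fact_add_eq_fact_mult_pochhammer[of m "n - m", where 'a = 'a]
  by (simp add: add.commute flip: pochhammer_of_nat)

lemma dvd_pochhammer_of_mem:
  fixes m l x :: nat
  assumes "m < x" and "x \<le> m + l"
  shows "x dvd pochhammer (m + 1) l"
proof -
  have "x dvd (\<Prod>i\<in>{m+1..m+l}. i)"
    using assms by (intro dvd_prodI[where f = "\<lambda>i. i"]) auto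
  then show ?thesis
    using prod_atLeastAtMost_eq_pochhammer[of m "m + l" 0] by simp
qed

lemma binomial_mult_pochhammer:
  fixes a j n :: nat
  assumes "j \<le> n"
  shows "(n choose j) * pochhammer (a + j + 1) (n - j) = pochhammer (j + 1) (n - j) * ((n + a) choose (n - j))"
proof -
  have "(of_nat ((n choose j) * pochhammer (a + j + 1) (n - j)) :: rat) =
      fact n / (fact j * fact (n - j)) * (fact (a + n) / fact (a + j))"
    using assms binomial_fact[OF assms, where 'a = rat]
      of_nat_pochhammer_eq_fact_div[of "a + j" "a + n", where 'a = rat]
    by simp
  also have "\<dots> = fact n / fact j * (fact (n + a) / (fact (n - j) * fact (n + a - (n - j))))"
    using assms by (simp add: add.commute)
  also have "\<dots> = of_nat (pochhammer (j + 1) (n - j) * ((n + a) choose (n - j)))"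
    using assms binomial_fact[of "n - j" "n + a", where 'a = rat]
      of_nat_pochhammer_eq_fact_div[of j n, where 'a = rat]
    by simp
  finally show ?thesis
    by (simp only: of_nat_eq_iff)
qed

section \<open>Valuations of factorials and rising products\<close>

lemma multiplicity_of_nat: "multiplicity (int p) (int x) = multiplicity p x"
proof -
  have "{n. int p ^ n dvd int x} = {n. p ^ n dvd x}"
    unfolding of_nat_power[symmetric] of_nat_dvd_iff ..
  then show ?thesis
    by (simp add: multiplicity_def)
qed

lemma multiplicity_fact_rec:
  assumes p: "prime (p::nat)"
  shows "multiplicity p (fact m :: nat) = m div p + multiplicity p (fact (m div p) :: nat)"
proof (induction m)
  case 0
  show ?case by simp
next
  case (Suc m)
  have "multiplicity p (fact (Suc m) :: nat) = multiplicity p (Suc m * fact m)"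
    by simp
  also have "\<dots> = multiplicity p (Suc m) + multiplicity p (fact m :: nat)"
    using p by (intro prime_elem_multiplicity_mult_distrib) auto
  finally have fact_Suc: "multiplicity p (fact (Suc m) :: nat) =
      multiplicity p (Suc m) + multiplicity p (fact m :: nat)" .
  show ?case
  proof (cases "p dvd Suc m")
    case True
    then obtain q where q: "Suc m = p * q" ..
    then obtain r where r: "q = Suc r"
      by (cases q) auto
    have p2: "p \<ge> 2"
      using p by (rule prime_ge_2_nat)
    have "q > 0" "Suc m div p = q"
      using q r p2 by simp_all
    moreover have "m div p = q - 1"
      using q r p2 by (intro div_nat_eqI) (simp_all add: algebra_simps)
    moreover have "multiplicity p (Suc m) = Suc (multiplicity p q)"
      using p q \<open>q > 0\<close> by (simp add: prime_elem_multiplicity_mult_distrib)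
    moreover have "multiplicity p (fact q :: nat) = multiplicity p q + multiplicity p (fact (q - 1) :: nat)"
      using p \<open>q > 0\<close> by (simp add: fact_reduce prime_elem_multiplicity_mult_distrib)
    ultimately show ?thesis
      using fact_Suc Suc.IH by simp
  next
    case False
    then have "Suc m div p = m div p" "multiplicity p (Suc m) = 0"
      by (simp_all add: div_Suc dvd_eq_mod_eq_0 not_dvd_imp_multiplicity_0)
    with fact_Suc Suc.IH show ?thesis
      by simp
  qed
qed

lemma multiplicity_fact_less:
  assumes p: "prime (p::nat)" and "m \<ge> 1"
  shows "(p - 1) * multiplicity p (fact m :: nat) < m"
  using \<open>m \<ge> 1\<close>
proof (induction m rule: less_induct)
  case (less m)
  have p1: "p > 1"
    using p prime_gt_1_nat by blast
  show ?case
  proof (cases "m < p")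
    case True
    then show ?thesis
      using multiplicity_fact_rec[OF p, of m] less.prems by simp
  next
    case False
    define q where "q = m div p"
    have "q \<ge> 1"
      using div_le_mono[of p m p] False p1 by (simp add: q_def)
    moreover have "q < m"
      using p1 less.prems by (simp add: q_def)
    ultimately have IH: "(p - 1) * multiplicity p (fact q :: nat) < q"
      using less.IH by blast
    have "(p - 1) * multiplicity p (fact m :: nat) = (p - 1) * q + (p - 1) * multiplicity p (fact q :: nat)"
      using multiplicity_fact_rec[OF p, of m] by (simp add: q_def algebra_simps)
    also have "\<dots> < (p - 1) * q + q"
      using IH by simp
    also have "\<dots> = p * q"
      using p1 by (simp add: algebra_simps)
    also have "\<dots> \<le> m"
      by (simp add: q_def)
    finally show ?thesis .
  qed
qed

lemma multiplicity_fact_below_square: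
  assumes p: "prime (p::nat)" and "m < p * p"
  shows "multiplicity p (fact m :: nat) = m div p"
proof -
  have "m div p < p"
    using assms by (simp add: div_less_iff_less_mult prime_gt_0_nat)
  then have "multiplicity p (fact (m div p) :: nat) = 0"
    using p by (simp add: not_dvd_imp_multiplicity_0 prime_dvd_fact_iff)
  then show ?thesis
    using multiplicity_fact_rec[OF p, of m] by simp
qed

lemma multiplicity_fact_add:
  assumes "prime (p::nat)"
  shows "multiplicity p (fact (m + j) :: nat) =
    multiplicity p (fact m :: nat) + multiplicity p (pochhammer (m + 1) j)"
proof -
  have "pochhammer (m + 1) j \<noteq> (0::nat)"
    by (simp add: pochhammer_pos)
  then show ?thesis
    using assms fact_add_eq_fact_mult_pochhammer[of m j, where 'a = nat]
    by (simp add: prime_elem_multiplicity_mult_distrib)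
qed

text \<open>The hypothesis of the paper on \<open>p\<close>, namely \<open>p \<ge> min (2 u\<^sub>0) (k + u\<^sub>0) \<or> (p > 2 k \<and> p\<^sup>2 - p \<ge> a)\<close>
  with \<open>u\<^sub>0 = a / k\<close>, cleared of denominators.\<close>
definition prime_bound_condition :: "nat \<Rightarrow> nat \<Rightarrow> nat \<Rightarrow> bool" where
  "prime_bound_condition p k a \<longleftrightarrow>
     2 * a \<le> p * k \<or> k * k + a \<le> p * k \<or> (2 * k < p \<and> a + p \<le> p * p)"

lemma prime_bound_conditionI:
  assumes k: "1 \<le> k"
    and "real p \<ge> min (2 * (real a / real k)) (real k + real a / real k) \<or> (p > 2 * k \<and> p ^ 2 - p \<ge> a)"
  shows "prime_bound_condition p k a"
proof -
  have kr: "real k > 0"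
    using k by simp
  consider "2 * (real a / real k) \<le> real p" | "real k + real a / real k \<le> real p"
    | "p > 2 * k" "p ^ 2 - p \<ge> a"
    using assms(2) unfolding min_le_iff_disj by blast
  then show ?thesis
  proof cases
    case 1
    then have "real (2 * a) \<le> real (p * k)"
      using kr by (simp add: divide_le_eq mult.commute)
    then show ?thesis
      unfolding prime_bound_condition_def of_nat_le_iff by simp
  next
    case 2
    then have "(real k + real a / real k) * real k \<le> real p * real k"
      using kr by (intro mult_right_mono) auto
    moreover have "(real k + real a / real k) * real k = real k * real k + real a"
      using kr by (simp add: distrib_right)
    ultimately have "real (k * k + a) \<le> real (p * k)"
      by simp
    then show ?thesis
      unfolding prime_bound_condition_def of_nat_le_iff by simp
  next
    case 3
    have "p \<le> p * p"
      by (cases p) auto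
    moreover have "a \<le> p * p - p"
      using 3(2) by (simp add: power2_eq_square)
    ultimately have "a + p \<le> p * p"
      by linarith
    then show ?thesis
      using 3(1) by (simp add: prime_bound_condition_def)
  qed
qed

lemma prime_bound_condition_imp_less_square:
  assumes "prime_bound_condition p k a" and "1 \<le> k" and "k < p"
  shows "a < p * p"
proof -
  have "p * k < p * p" "1 \<le> k * k"
    using assms(2,3) by simp_all
  with assms(1) show ?thesis
    unfolding prime_bound_condition_def by (elim disjE conjE) linarith+
qed

lemma mod_add_less_of_not_dvd:
  assumes "p > 0" and "\<forall>i\<in>{1..k}. \<not> p dvd a + i"
  shows "a mod p + k < (p::nat)"
proof (rule ccontr)
  assume "\<not> ?thesis"
  then have "p - a mod p \<in> {1..k}"
    using mod_less_divisor[OF assms(1), of a] by auto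
  moreover have "a + (p - a mod p) = p * (a div p) + p"
    using mod_less_divisor[OF assms(1), of a] mod_less_eq_dividend[of a p] minus_mod_eq_mult_div[of a p]
    by linarith
  then have "p dvd a + (p - a mod p)"
    by simp
  ultimately show False
    using assms(2) by blast
qed

text \<open>Legendre's formula bounds \<open>(p - 1) v\<^sub>p((a + 1) \<cdots> (a + j))\<close> by \<open>a div p + a mod p + j - 1\<close>;
  once \<open>a + j \<ge> p\<^sup>2\<close> the inequality below turns this into \<open>k v\<^sub>p((a + 1) \<cdots> (a + j)) < j\<close>.\<close>
lemma legendre_gap_of_2a_le_pk:
  fixes p k d1 d0 j a :: int
  assumes "a = d1 * p + d0" "0 \<le> d0" "d0 + k + 1 \<le> p" "k \<ge> 1" "d1 \<ge> 0" "j + a \<ge> p * p"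
    "2 * a \<le> p * k" "k + 2 \<le> p"
  shows "k * (d1 + d0 + j - 1) < (p - 1) * j"
proof -
  have pp: "p > 0"
    using assms by linarith
  have e1: "p * (2 * d1) = 2 * a - 2 * d0"
    using assms(1) by (simp add: algebra_simps)
  have "p * (2 * d1) \<le> p * k"
    using e1 assms(2,7) by linarith
  then have d1: "2 * d1 \<le> k"
    using pp by (meson mult_left_le_imp_le)
  have "p * k < p * p"
    using pp assms by (intro mult_strict_left_mono) auto
  moreover have "a \<ge> 0"
    using assms pp by (simp add: mult_nonneg_nonneg)
  ultimately have "a < p * p"
    using assms(7) by linarith
  then have j0: "j \<ge> 0"
    using assms by linarith
  have "k * (2 * d1) \<le> k * k"
    using d1 assms by (intro mult_left_mono) auto
  moreover have "k * d0 \<le> k * (p - k - 1)"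
    using assms by (intro mult_left_mono) auto
  moreover have "(k + 1) * j \<le> (p - 1) * j"
    using assms j0 by (intro mult_right_mono) auto
  moreover have "0 \<le> (2 * p - k) * (p - k)"
    using assms by (intro mult_nonneg_nonneg) auto
  ultimately show ?thesis
    using assms by (simp only: algebra_simps; linarith)
qed

lemma legendre_gap_of_kk_a_le_pk:
  fixes p k d1 d0 j a :: int
  assumes "a = d1 * p + d0" "0 \<le> d0" "d0 + k + 1 \<le> p" "k \<ge> 1" "d1 \<ge> 0" "j + a \<ge> p * p"
    "k * k + a \<le> p * k" "k + 2 \<le> p"
  shows "k * (d1 + d0 + j - 1) < (p - 1) * j"
proof -
  have pp: "p > 0"
    using assms by linarith
  have kk: "k * k > 0"
    using assms by simp
  have e: "p * d1 = a - d0"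
    using assms(1) by (simp add: algebra_simps)
  have "p * d1 < p * k"
    using e assms(2,7) kk by linarith
  then have d1: "d1 \<le> k - 1"
    using pp by (smt (verit) mult_left_less_imp_less)
  have "(p - k) * (p - k) \<ge> 0"
    by simp
  moreover have "k * p \<ge> 0"
    using assms pp by simp
  ultimately have "p * p - p * k + k * k \<ge> 0"
    by (simp only: algebra_simps; linarith)
  then have j0: "j \<ge> 0"
    using assms kk by linarith
  have "k * d1 \<le> k * (k - 1)"
    using d1 assms by (intro mult_left_mono) auto
  moreover have "k * d0 \<le> k * (p - k - 1)"
    using assms by (intro mult_left_mono) auto
  moreover have "(k + 1) * j \<le> (p - 1) * j"
    using assms j0 by (intro mult_right_mono) auto
  moreover have "0 \<le> (p - k) * (p - k)"
    by simp
  ultimately show ?thesis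
    using assms by (simp only: algebra_simps; linarith)
qed

lemma legendre_gap_of_2k_lt_p:
  fixes p k d1 d0 j a :: int
  assumes "a = d1 * p + d0" "0 \<le> d0" "d0 + k + 1 \<le> p" "k \<ge> 1" "d1 \<ge> 0" "j + a \<ge> p * p"
    "2 * k < p" "a + p \<le> p * p"
  shows "k * (d1 + d0 + j - 1) < (p - 1) * j"
proof (cases "d1 \<ge> p - 1")
  case True
  have pp: "p > 0"
    using assms by linarith
  have "p * (p - 1) \<le> p * d1"
    using True pp by (intro mult_left_mono) auto
  then have "d0 = 0" "p * d1 \<le> p * (p - 1)"
    using assms by (simp_all add: algebra_simps)
  then have "d1 \<le> p - 1"
    using pp by (meson mult_left_le_imp_le)
  then have d1: "d1 = p - 1"
    using True by simp
  then have j: "j \<ge> p"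
    using assms \<open>d0 = 0\<close> by (simp add: algebra_simps)
  have "(2 * k) * j \<le> (p - 1) * j"
    using assms j pp by (intro mult_right_mono) auto
  moreover have "k * p \<le> k * j"
    using assms j by (intro mult_left_mono) auto
  moreover have "k * (d1 + d0 + j - 1) = k * p + k * j - 2 * k"
    unfolding d1 \<open>d0 = 0\<close> by (simp add: algebra_simps)
  moreover have "(p - 1) * j = p * j - j"
    by (simp add: algebra_simps)
  ultimately show ?thesis
    using assms(4) by (simp only: algebra_simps; linarith)
next
  case False
  have pp: "p > 0"
    using assms by linarith
  have "p * d1 \<le> p * (p - 2)"
    using False pp by (intro mult_left_mono) auto
  then have j: "j \<ge> p + k + 1"
    using assms by (simp add: algebra_simps)
  have "(p - 1 - k) * (p + k + 1) \<le> (p - 1 - k) * j"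
    using assms j by (intro mult_left_mono) auto
  moreover have "k * d1 \<le> k * (p - 2)"
    using False assms by (intro mult_left_mono) auto
  moreover have "k * d0 \<le> k * (p - k - 1)"
    using assms by (intro mult_left_mono) auto
  moreover have "p * 1 \<le> p * (p - 2 * k)"
    using assms by (intro mult_left_mono) auto
  ultimately show ?thesis
    using assms by (simp only: algebra_simps; linarith)
qed

lemma legendre_gap:
  fixes p k a j :: nat
  assumes cond: "prime_bound_condition p k a" and d0: "a mod p + k < p"
    and k: "1 \<le> k" "k + 2 \<le> p" and j: "p * p \<le> a + j"
  shows "int k * (int (a div p) + int (a mod p) + int j - 1) < (int p - 1) * int j"
proof -
  have base: "int a = int (a div p) * int p + int (a mod p)" "0 \<le> int (a mod p)"
    "int (a mod p) + int k + 1 \<le> int p" "int k \<ge> 1" "int (a div p) \<ge> 0"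
    "int j + int a \<ge> int p * int p"
    using d0 k j by (simp_all flip: of_nat_mult of_nat_add)
  consider "2 * a \<le> p * k" | "k * k + a \<le> p * k" | "2 * k < p" "a + p \<le> p * p"
    using cond unfolding prime_bound_condition_def by blast
  then show ?thesis
  proof cases
    case 1
    then have "2 * int a \<le> int p * int k"
      by (simp flip: of_nat_mult)
    then show ?thesis
      using legendre_gap_of_2a_le_pk[OF base] k by simp
  next
    case 2
    then have "int k * int k + int a \<le> int p * int k"
      by (simp flip: of_nat_mult)
    then show ?thesis
      using legendre_gap_of_kk_a_le_pk[OF base] k by simp
  next
    case 3
    then have "2 * int k < int p" "int a + int p \<le> int p * int p"
      by (simp_all flip: of_nat_mult)
    then show ?thesis
      using legendre_gap_of_2k_lt_p[OF base] by simp
  qed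
qed

lemma mult_div_add_less:
  fixes d k j p :: nat
  assumes "d + k < p" and "1 \<le> j"
  shows "k * ((d + j) div p) < j"
proof (cases "(d + j) div p = 0")
  case True
  then show ?thesis
    using assms(2) by simp
next
  case False
  define q where "q = (d + j) div p"
  have "(p - k) * 1 \<le> (p - k) * q"
    using False by (intro mult_le_mono2) (simp add: q_def)
  then have "k * q + p \<le> p * q + k"
    using assms(1) by (simp add: diff_mult_distrib)
  moreover have "p * q \<le> d + j"
    unfolding q_def by (metis div_mult_mod_eq le_add1 mult.commute)
  ultimately have "k * q < j"
    using assms(1) by linarith
  then show ?thesis
    by (simp add: q_def)
qed

lemma multiplicity_pochhammer_less:
  fixes p k a j :: nat
  assumes p: "prime p" and k: "1 \<le> k" "k + 2 \<le> p"
    and not_dvd: "\<forall>i\<in>{1..k}. \<not> p dvd a + i"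
    and cond: "prime_bound_condition p k a" and j: "1 \<le> j"
  shows "k * multiplicity p (pochhammer (a + 1) j) < j"
proof -
  define S where "S = multiplicity p (pochhammer (a + 1) j)"
  have p0: "p > 0"
    using k by simp
  have d0: "a mod p + k < p"
    using mod_add_less_of_not_dvd[OF p0 not_dvd] .
  have "a < p * p"
    using prime_bound_condition_imp_less_square[OF cond k(1)] k by simp
  then have fact_a_plus_j: "multiplicity p (fact (a + j) :: nat) = a div p + S"
    using multiplicity_fact_add[OF p, of a j] multiplicity_fact_below_square[OF p] by (simp add: S_def)
  show ?thesis
  proof (cases "a + j < p * p")
    case True
    have "a + j = (a mod p + j) + (a div p) * p"
      by simp
    then have "(a + j) div p = a div p + (a mod p + j) div p"
      using p0 by (metis add.commute div_mult_self1 less_not_refl2)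
    then have "S = (a mod p + j) div p"
      using fact_a_plus_j multiplicity_fact_below_square[OF p True] by simp
    then show ?thesis
      using mult_div_add_less[OF d0 j] by (simp add: S_def)
  next
    case False
    have "(p - 1) * (a div p + S) < a + j"
      using multiplicity_fact_less[OF p, of "a + j"] j fact_a_plus_j by simp
    then have "int ((p - 1) * (a div p + S)) < int (a + j)"
      by (simp only: of_nat_less_iff)
    then have "(int p - 1) * (int (a div p) + int S) < int a + int j"
      using p0 by (simp add: of_nat_diff Suc_leI)
    moreover have "int a = int (a div p) * int p + int (a mod p)"
      by (metis div_mult_mod_eq of_nat_add of_nat_mult)
    ultimately have legendre: "(int p - 1) * int S \<le> int (a div p) + int (a mod p) + int j - 1"
      by (simp add: algebra_simps)
    have "(int p - 1) * (int k * int S) = int k * ((int p - 1) * int S)"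
      by (simp only: ac_simps)
    also have "\<dots> \<le> int k * (int (a div p) + int (a mod p) + int j - 1)"
      using legendre by (intro mult_left_mono) simp_all
    also have "\<dots> < (int p - 1) * int j"
      using legendre_gap[OF cond d0 k] False by simp
    finally have "int k * int S < int j"
      using k by (simp add: mult_less_cancel_left)
    then show ?thesis
      by (simp add: S_def flip: of_nat_mult)
  qed
qed

section \<open>Newton polygons\<close>

definition val_weight :: "nat \<Rightarrow> 'a \<Rightarrow> 'a::{factorial_semiring,idom} poly \<Rightarrow> nat \<Rightarrow> nat" where
  "val_weight \<alpha> p P i = \<alpha> * multiplicity p (coeff P i) + i"

text \<open>\<open>u\<close> is the largest index minimising \<open>\<alpha> \<nu>\<^sub>p(P\<^sub>i) + i\<close>: the right end of the edge of slope
  \<open>-1/\<alpha>\<close> of the Newton polygon of \<open>P\<close> (or the vertex supporting a line of that slope).\<close>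
definition dominant_index :: "nat \<Rightarrow> 'a \<Rightarrow> 'a::{factorial_semiring,idom} poly \<Rightarrow> nat \<Rightarrow> bool" where
  "dominant_index \<alpha> p P u \<longleftrightarrow> coeff P u \<noteq> 0 \<and>
     (\<forall>i. coeff P i \<noteq> 0 \<longrightarrow> val_weight \<alpha> p P u \<le> val_weight \<alpha> p P i) \<and>
     (\<forall>i>u. coeff P i \<noteq> 0 \<longrightarrow> val_weight \<alpha> p P u < val_weight \<alpha> p P i)"

lemma dominant_index_exists:
  assumes "P \<noteq> 0"
  shows "\<exists>u. dominant_index \<alpha> p P u"
proof -
  let ?w = "val_weight \<alpha> p P"
  define A where "A = {i. coeff P i \<noteq> 0}"
  define T where "T = Min (?w ` A)"
  define B where "B = {i\<in>A. ?w i = T}"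
  have "finite A"
    unfolding A_def by (rule finite_subset[of _ "{..degree P}"]) (auto intro: le_degree)
  moreover have "degree P \<in> A"
    using assms by (simp add: A_def)
  ultimately have T_in: "T \<in> ?w ` A" and T_le: "\<And>i. i \<in> A \<Longrightarrow> T \<le> ?w i"
    unfolding T_def by (auto intro: Min_in Min_le)
  have "finite B" "B \<noteq> {}"
    using \<open>finite A\<close> T_in by (auto simp: B_def)
  then have u: "Max B \<in> B" and u_max: "\<And>i. i \<in> B \<Longrightarrow> i \<le> Max B"
    by auto
  have "?w (Max B) < ?w i" if "i > Max B" "coeff P i \<noteq> 0" for i
    using u_max[of i] T_le[of i] u that by (force simp: B_def A_def)
  then have "dominant_index \<alpha> p P (Max B)"
    using u T_le unfolding dominant_index_def B_def A_def by auto
  then show ?thesis ..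
qed

lemma dominant_index_unique:
  assumes "dominant_index \<alpha> p P u" and "dominant_index \<alpha> p P v"
  shows "u = v"
  using assms unfolding dominant_index_def by (metis leD linorder_neqE_nat)

lemma power_dvd_coeff_product:
  assumes p: "prime_elem p" and "\<alpha> > 0" and nz: "coeff G i \<noteq> 0" "coeff H j \<noteq> 0"
    and less: "\<alpha> * e + (i + j) < val_weight \<alpha> p G i + val_weight \<alpha> p H j"
  shows "p ^ Suc e dvd coeff G i * coeff H j"
proof (rule multiplicity_dvd')
  have "\<alpha> * e < \<alpha> * (multiplicity p (coeff G i) + multiplicity p (coeff H j))"
    using less by (simp add: val_weight_def algebra_simps)
  then show "Suc e \<le> multiplicity p (coeff G i * coeff H j)"
    using p nz by (simp add: prime_elem_multiplicity_mult_distrib)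
qed

lemma multiplicity_add_power_dvd:
  fixes x y :: "'a::{factorial_semiring,idom}"
  assumes p: "\<not> is_unit p" and x: "x \<noteq> 0" and y: "p ^ Suc (multiplicity p x) dvd y"
  shows "\<not> p ^ Suc (multiplicity p x) dvd x + y" and "multiplicity p (x + y) = multiplicity p x"
proof -
  show not_dvd: "\<not> p ^ Suc (multiplicity p x) dvd x + y"
    using power_dvd_iff_le_multiplicity[OF x p, of "Suc (multiplicity p x)"] dvd_add_left_iff[OF y]
    by simp
  have "p ^ multiplicity p x dvd y"
    using y by (rule dvd_trans[rotated]) (simp add: le_imp_power_dvd)
  then have "p ^ multiplicity p x dvd x + y"
    by (simp add: multiplicity_dvd)
  with not_dvd show "multiplicity p (x + y) = multiplicity p x"
    by (intro multiplicity_eqI)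
qed

lemma val_weight_mult_ge:
  assumes p: "prime_elem p" and \<alpha>: "\<alpha> > 0" and nz: "coeff (G * H) m \<noteq> 0"
    and bound: "\<And>i. i \<le> m \<Longrightarrow> coeff G i \<noteq> 0 \<Longrightarrow> coeff H (m - i) \<noteq> 0 \<Longrightarrow>
      T \<le> val_weight \<alpha> p G i + val_weight \<alpha> p H (m - i)"
  shows "T \<le> val_weight \<alpha> p (G * H) m"
proof (rule ccontr)
  define e where "e = multiplicity p (coeff (G * H) m)"
  assume "\<not> ?thesis"
  then have less: "\<alpha> * e + m < T"
    by (simp add: val_weight_def e_def)
  have "p ^ Suc e dvd coeff G i * coeff H (m - i)" if "i \<le> m" for i
  proof (cases "coeff G i = 0 \<or> coeff H (m - i) = 0")
    case False
    then show ?thesis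
      using power_dvd_coeff_product[OF p \<alpha>, of G i H "m - i" e] bound[of i] less that by fastforce
  qed auto
  then have "p ^ Suc e dvd coeff (G * H) m"
    unfolding coeff_mult by (intro dvd_sum) simp
  then have "Suc e \<le> e"
    unfolding e_def by (rule multiplicity_geI[OF nz prime_elem_not_unit[OF p]])
  then show False
    by simp
qed

lemma coeff_mult_split:
  assumes "u \<le> m"
  shows "coeff (G * H) m = coeff G u * coeff H (m - u) + (\<Sum>i\<in>{..m} - {u}. coeff G i * coeff H (m - i))"
  unfolding coeff_mult using assms by (subst sum.remove[of _ u]) auto

lemma dominant_index_mult:
  assumes p: "prime_elem p" and \<alpha>: "\<alpha> > 0"
    and u: "dominant_index \<alpha> p G u" and v: "dominant_index \<alpha> p H v"
  shows "dominant_index \<alpha> p (G * H) (u + v)"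
    and "val_weight \<alpha> p (G * H) (u + v) = val_weight \<alpha> p G u + val_weight \<alpha> p H v"
proof -
  let ?wG = "val_weight \<alpha> p G" and ?wH = "val_weight \<alpha> p H" and ?w = "val_weight \<alpha> p (G * H)"
  define T where "T = ?wG u + ?wH v"
  have pair_ge: "T \<le> ?wG i + ?wH j" if "coeff G i \<noteq> 0" "coeff H j \<noteq> 0" for i j
    using u v that by (simp add: dominant_index_def T_def add_mono)
  have pair_gt: "T < ?wG i + ?wH j" if "coeff G i \<noteq> 0" "coeff H j \<noteq> 0" "u < i \<or> v < j" for i j
    using u v that unfolding dominant_index_def T_def by (meson add_less_le_mono add_le_less_mono)
  define x where "x = coeff G u * coeff H v"
  define y where "y = (\<Sum>i\<in>{..u + v} - {u}. coeff G i * coeff H (u + v - i))"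
  have x0: "x \<noteq> 0"
    using u v by (simp add: dominant_index_def x_def)
  have e: "\<alpha> * multiplicity p x + (u + v) = T"
    using u v p by (simp add: dominant_index_def x_def T_def val_weight_def
        prime_elem_multiplicity_mult_distrib algebra_simps)
  have y_dvd: "p ^ Suc (multiplicity p x) dvd y"
    unfolding y_def
  proof (intro dvd_sum)
    fix i assume i: "i \<in> {..u + v} - {u}"
    show "p ^ Suc (multiplicity p x) dvd coeff G i * coeff H (u + v - i)"
    proof (cases "coeff G i = 0 \<or> coeff H (u + v - i) = 0")
      case False
      have "u < i \<or> v < u + v - i"
        using i by auto
      then show ?thesis
        using False i e pair_gt[of i "u + v - i"]
        by (intro power_dvd_coeff_product[OF p \<alpha>]) auto
    qed auto
  qed
  have coeff_uv: "coeff (G * H) (u + v) = x + y"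
    unfolding x_def y_def using coeff_mult_split[of u "u + v" G H] by simp
  note sum = multiplicity_add_power_dvd[OF prime_elem_not_unit[OF p] x0 y_dvd]
  have nz: "coeff (G * H) (u + v) \<noteq> 0"
    using sum(1) coeff_uv by auto
  have val: "?w (u + v) = T"
    using sum(2) coeff_uv e by (simp add: val_weight_def)
  have "T \<le> ?w m" if "coeff (G * H) m \<noteq> 0" for m
    using that pair_ge by (intro val_weight_mult_ge[OF p \<alpha>])
  moreover have "Suc T \<le> ?w m" if "coeff (G * H) m \<noteq> 0" "m > u + v" for m
  proof (intro val_weight_mult_ge[OF p \<alpha>])
    fix i assume "i \<le> m" "coeff G i \<noteq> 0" "coeff H (m - i) \<noteq> 0"
    moreover have "u < i \<or> v < m - i"
      using that(2) by linarith
    ultimately show "Suc T \<le> ?wG i + ?wH (m - i)"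
      using pair_gt by (simp add: Suc_le_eq)
  qed fact
  ultimately show "dominant_index \<alpha> p (G * H) (u + v)"
    using nz val by (auto simp: dominant_index_def Suc_le_eq)
  show "?w (u + v) = ?wG u + ?wH v"
    using val by (simp add: T_def)
qed

lemma dominant_index_zero_of_min_multiplicity:
  assumes "coeff G 0 \<noteq> 0" and "\<And>i. coeff G i \<noteq> 0 \<Longrightarrow> multiplicity p (coeff G 0) \<le> multiplicity p (coeff G i)"
  shows "dominant_index \<alpha> p G 0"
proof -
  have "val_weight \<alpha> p G 0 + i \<le> val_weight \<alpha> p G i" if "coeff G i \<noteq> 0" for i
    using assms(2)[OF that] by (simp add: val_weight_def)
  then show ?thesis
    using assms(1) by (fastforce simp: dominant_index_def)
qed

lemma min_multiplicity_of_dominant_index_zero: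
  assumes "dominant_index k p G 0" and "degree G \<le> k" and "coeff G i \<noteq> 0"
  shows "multiplicity p (coeff G 0) \<le> multiplicity p (coeff G i)"
proof (cases "i = 0")
  case False
  have "i \<le> k"
    using assms(2,3) le_degree by fastforce
  have "k * multiplicity p (coeff G 0) < k * multiplicity p (coeff G i) + i"
    using assms(1,3) False by (simp add: dominant_index_def val_weight_def)
  also have "\<dots> \<le> k * Suc (multiplicity p (coeff G i))"
    using \<open>i \<le> k\<close> by simp
  finally show ?thesis
    by (simp add: mult_less_cancel1 del: mult_Suc_right)
qed simp

lemma no_factor_of_degree:
  fixes G H :: "'a::{factorial_semiring,idom} poly"
  assumes p: "prime_elem p" and k: "k > 0" and dG: "degree G = k"
    and F0: "coeff (G * H) 0 \<noteq> 0"
    and slope: "\<And>j. j \<ge> 1 \<Longrightarrow> coeff (G * H) j \<noteq> 0 \<Longrightarrow>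
      k * multiplicity p (coeff (G * H) 0) < k * multiplicity p (coeff (G * H) j) + j"
    and low: "\<And>j. j \<le> degree (G * H) - k \<Longrightarrow> coeff (G * H) j \<noteq> 0 \<Longrightarrow>
      multiplicity p (lead_coeff (G * H)) < multiplicity p (coeff (G * H) j)"
  shows False
proof -
  let ?F = "G * H" and ?n = "degree (G * H)"
  have G0: "G \<noteq> 0" and H0: "H \<noteq> 0"
    using F0 by auto
  have dH: "degree H = ?n - k"
    using degree_mult_eq[OF G0 H0] dG by simp
  have "val_weight k p ?F 0 < val_weight k p ?F j" if "j > 0" "coeff ?F j \<noteq> 0" for j
    using slope[of j] that by (simp add: val_weight_def)
  then have "dominant_index k p ?F 0"
    using F0 unfolding dominant_index_def by (metis le_less neq0_conv)
  moreover obtain u where u: "dominant_index k p G u"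
    using dominant_index_exists[OF G0] ..
  moreover obtain v where "dominant_index k p H v"
    using dominant_index_exists[OF H0] ..
  ultimately have "u + v = 0"
    using dominant_index_mult(1)[OF p k u] dominant_index_unique by blast
  then have "dominant_index k p G 0"
    using u by simp
  \<comment> \<open>a weight exceeding every index compares valuations first\<close>
  then have "dominant_index (Suc ?n) p G 0"
    using min_multiplicity_of_dominant_index_zero dG
    by (intro dominant_index_zero_of_min_multiplicity) (auto simp: dominant_index_def)
  moreover obtain w where w: "dominant_index (Suc ?n) p H w"
    using dominant_index_exists[OF H0] ..
  ultimately have Fw: "dominant_index (Suc ?n) p ?F w"
    using dominant_index_mult(1)[OF p] by fastforce
  have "w \<le> degree H"
    using w by (auto simp: dominant_index_def intro: le_degree)
  then have "w \<le> ?n - k"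
    using dH by simp
  then have "multiplicity p (lead_coeff ?F) < multiplicity p (coeff ?F w)"
    using low Fw by (simp add: dominant_index_def)
  moreover have "val_weight (Suc ?n) p ?F w \<le> val_weight (Suc ?n) p ?F ?n"
    using Fw F0 unfolding dominant_index_def by (metis leading_coeff_0_iff mult_eq_0_iff coeff_0)
  then have "Suc ?n * multiplicity p (coeff ?F w) < Suc ?n * Suc (multiplicity p (lead_coeff ?F))"
    by (simp add: val_weight_def)
  ultimately show False
    by (simp only: mult_less_cancel1) simp
qed

lemma no_factor_of_degree_smult:
  fixes F G H :: "'a::{factorial_semiring,idom} poly"
  assumes p: "prime_elem p" and k: "k > 0" and dG: "degree G = k"
    and GH: "G * H = smult d F" and d: "d \<noteq> 0"
    and F0: "coeff F 0 \<noteq> 0"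
    and slope: "\<And>j. j \<ge> 1 \<Longrightarrow> coeff F j \<noteq> 0 \<Longrightarrow>
      k * multiplicity p (coeff F 0) < k * multiplicity p (coeff F j) + j"
    and low: "\<And>j. j \<le> degree F - k \<Longrightarrow> coeff F j \<noteq> 0 \<Longrightarrow>
      multiplicity p (lead_coeff F) < multiplicity p (coeff F j)"
  shows False
proof (rule no_factor_of_degree[OF p k dG])
  have coeff_GH: "coeff (G * H) j = d * coeff F j" for j
    using GH by simp
  have val: "multiplicity p (d * coeff F j) = multiplicity p d + multiplicity p (coeff F j)"
    if "coeff F j \<noteq> 0" for j
    using p d that by (simp add: prime_elem_multiplicity_mult_distrib)
  have degree: "degree (G * H) = degree F"
    using GH d by simp
  show "coeff (G * H) 0 \<noteq> 0"
    using F0 d by (simp add: coeff_GH)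
  show "k * multiplicity p (coeff (G * H) 0) < k * multiplicity p (coeff (G * H) j) + j"
    if "j \<ge> 1" "coeff (G * H) j \<noteq> 0" for j
    using slope[of j] that F0 d by (simp add: coeff_GH val algebra_simps)
  show "multiplicity p (lead_coeff (G * H)) < multiplicity p (coeff (G * H) j)"
    if "j \<le> degree (G * H) - k" "coeff (G * H) j \<noteq> 0" for j
  proof -
    have "F \<noteq> 0"
      using F0 by auto
    then show ?thesis
      using low[of j] that degree val[of "degree F"] by (auto simp: coeff_GH val)
  qed
qed

section \<open>Rational factors of integer polynomials\<close>

lemma map_poly_of_int_mult:
  "map_poly (of_int :: int \<Rightarrow> 'a::comm_ring_1) (P * Q) = map_poly of_int P * map_poly of_int Q"
  by (intro poly_eqI) (simp add: coeff_map_poly coeff_mult)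

lemma map_poly_of_int_inject:
  assumes "map_poly (of_int :: int \<Rightarrow> 'a::ring_char_0) P = map_poly of_int Q"
  shows "P = Q"
proof (rule poly_eqI)
  fix i
  show "coeff P i = coeff Q i"
    using arg_cong[OF assms, of "\<lambda>R. coeff R i"] by (simp add: coeff_map_poly)
qed

lemma int_poly_multiple:
  fixes g :: "rat poly"
  shows "\<exists>d G. d \<noteq> (0::int) \<and> map_poly of_int G = smult (of_int d) g"
proof -
  define d where "d = (\<Prod>i\<le>degree g. snd (quotient_of (coeff g i)))"
  have d0: "d \<noteq> 0"
    unfolding d_def using quotient_of_denom_pos' by (simp add: less_imp_neq[symmetric])
  have int: "of_int d * coeff g i \<in> \<int>" for i
  proof (cases "i \<le> degree g")
    case True
    obtain num den where q: "quotient_of (coeff g i) = (num, den)"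
      by force
    have "den dvd d"
      unfolding d_def using True q by (metis atMost_iff dvd_prodI finite_atMost snd_conv)
    then obtain e where e: "d = den * e" ..
    have "of_int d * coeff g i = of_int d * (of_int num / of_int den)"
      using quotient_of_div[OF q] by simp
    also have "\<dots> = of_int (e * num)"
      using e quotient_of_denom_pos[OF q] by simp
    finally show ?thesis
      by simp
  qed (simp add: coeff_eq_0)
  define G where "G = map_poly (\<lambda>x. \<lfloor>x\<rfloor>) (smult (of_int d) g)"
  have "map_poly of_int G = smult (of_int d) g"
  proof (rule poly_eqI)
    fix i
    show "coeff (map_poly of_int G) i = coeff (smult (of_int d) g) i"
      using int[of i] by (simp add: G_def coeff_map_poly)
  qed
  then show ?thesis
    using d0 by blast
qed

lemma int_factors_of_rat_factor:
  fixes F :: "int poly" and f g :: "rat poly"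
  assumes Ff: "map_poly of_int F = smult K f" and K: "K \<noteq> 0" and "g dvd f"
  obtains d G H where "d \<noteq> 0" "G * H = smult d F" "degree G = degree g"
proof -
  obtain h where fgh: "f = g * h"
    using \<open>g dvd f\<close> ..
  obtain d1 G where G: "d1 \<noteq> 0" "map_poly of_int G = smult (of_int d1) g"
    using int_poly_multiple by blast
  obtain d2 H where H: "d2 \<noteq> 0" "map_poly of_int H = smult (of_int d2) (smult K h)"
    using int_poly_multiple by blast
  have "map_poly (of_int :: int \<Rightarrow> rat) (G * H) = smult (of_int (d1 * d2)) (smult K (g * h))"
    unfolding map_poly_of_int_mult G H by (simp add: algebra_simps)
  also have "\<dots> = map_poly of_int (smult (d1 * d2) F)"
    by (simp add: map_poly_smult Ff fgh)
  finally have "G * H = smult (d1 * d2) F"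
    by (rule map_poly_of_int_inject)
  moreover have "degree G = degree g"
    using arg_cong[OF G(2), of degree] G(1) by (simp add: degree_map_poly)
  ultimately show ?thesis
    using G(1) H(1) by (intro that[of "d1 * d2" G H]) simp_all
qed

lemma no_factor_of_degree_pochhammer_coeffs:
  fixes e :: "nat \<Rightarrow> int" and p a n k :: nat
  defines "T \<equiv> \<lambda>j. pochhammer (a + j + 1) (n - j)"
  assumes p: "prime p" and k: "1 \<le> k" "k \<le> n" "k + 2 \<le> p"
    and not_dvd: "\<forall>i\<in>{1..k}. \<not> p dvd a + i" and cond: "prime_bound_condition p k a"
    and e0: "\<not> int p dvd e 0" and en: "\<not> int p dvd e n"
    and low: "\<And>j. j \<le> n - k \<Longrightarrow> int p dvd e j * int (T j)"
    and GH: "G * H = smult d (\<Sum>j\<le>n. monom (e j * int (T j)) j)" and d: "d \<noteq> 0"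
  shows "degree G \<noteq> k"
proof
  assume dG: "degree G = k"
  define F where "F = (\<Sum>j\<le>n. monom (e j * int (T j)) j)"
  have coeff: "coeff F j = (if j \<le> n then e j * int (T j) else 0)" for j
    by (simp add: F_def coeff_sum)
  have T_pos: "T j > 0" for j
    by (simp add: T_def pochhammer_pos)
  have degree: "degree F = n"
    using en coeff T_pos by (intro antisym degree_le le_degree) (auto simp: T_def)
  have p': "prime_elem (int p)"
    using p by simp
  have val_coeff: "multiplicity (int p) (coeff F j) = multiplicity (int p) (e j) + multiplicity p (T j)"
    if "j \<le> n" "e j \<noteq> 0" for j
    using that T_pos[of j] p' by (simp add: coeff prime_elem_multiplicity_mult_distrib multiplicity_of_nat)
  have T0: "T 0 = pochhammer (a + 1) j * T j" if "j \<le> n" for j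
    using pochhammer_product[OF that, of "a + 1"] by (simp add: T_def add_ac)
  have slope: "k * multiplicity (int p) (coeff F 0) < k * multiplicity (int p) (coeff F j) + j"
    if j: "j \<ge> 1" "coeff F j \<noteq> 0" for j
  proof -
    have jn: "j \<le> n" and ej: "e j \<noteq> 0"
      using j(2) by (simp_all add: coeff split: if_splits)
    have "multiplicity (int p) (coeff F 0) = multiplicity p (T 0)"
      using val_coeff[of 0] e0 by (cases "e 0 = 0") (simp_all add: not_dvd_imp_multiplicity_0)
    also have "\<dots> = multiplicity p (pochhammer (a + 1) j) + multiplicity p (T j)"
      using p T_pos[of j] by (simp add: T0[OF jn] prime_elem_multiplicity_mult_distrib pochhammer_pos)
    finally have "k * multiplicity (int p) (coeff F 0) =
        k * multiplicity p (pochhammer (a + 1) j) + k * multiplicity p (T j)"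
      by (simp add: algebra_simps)
    also have "\<dots> < j + k * multiplicity p (T j)"
      using multiplicity_pochhammer_less[OF p k(1,3) not_dvd cond j(1)] by simp
    also have "\<dots> \<le> j + k * multiplicity (int p) (coeff F j)"
      using val_coeff[OF jn ej] by simp
    finally show ?thesis
      by simp
  qed
  have lead: "multiplicity (int p) (lead_coeff F) = 0"
    using en by (simp add: degree coeff T_def not_dvd_imp_multiplicity_0)
  have low_val: "multiplicity (int p) (coeff F j) > 0" if "j \<le> n - k" "coeff F j \<noteq> 0" for j
  proof -
    have "j \<le> n" "e j * int (T j) \<noteq> 0"
      using that by (simp_all add: coeff split: if_splits)
    then show ?thesis
      using multiplicity_gt_zero_iff[OF _ prime_elem_not_unit[OF p']] low[OF that(1)]
      by (simp add: coeff)
  qed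
  show False
  proof (rule no_factor_of_degree_smult[OF p' _ dG GH[folded F_def] d])
    show "k > 0"
      using k by simp
    show "coeff F 0 \<noteq> 0"
      using e0 T_pos[of 0] by (auto simp: coeff)
  qed (use slope lead low_val degree in auto)
qed

lemma fna_eq_scaled_int_poly:
  "map_poly of_int (\<Sum>j\<le>n. monom (c j * int (pochhammer (a + j + 1) (n - j))) j) =
     smult (fact (a + n)) (fna n a c)"
proof (rule poly_eqI)
  fix m
  show "coeff (map_poly of_int (\<Sum>j\<le>n. monom (c j * int (pochhammer (a + j + 1) (n - j))) j)) m =
      coeff (smult (fact (a + n)) (fna n a c)) m"
  proof (cases "m \<le> n")
    case True
    then have "(of_nat (pochhammer (a + m + 1) (n - m)) :: rat) = fact (a + n) / fact (m + a)"
      using of_nat_pochhammer_eq_fact_div[of "a + m" "a + n", where 'a = rat] by (simp add: add.commute)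
    then show ?thesis
      using True by (simp add: coeff_map_poly coeff_sum fna_def)
  qed (simp add: coeff_map_poly coeff_sum fna_def)
qed

lemma laguerre_eq_scaled_int_poly:
  "map_poly of_int (\<Sum>j\<le>n. monom ((-1) ^ j * int (n choose j) * int (pochhammer (a + j + 1) (n - j))) j) =
     smult (fact n) (laguerre n (int a))"
proof (rule poly_eqI)
  fix m
  show "coeff (map_poly of_int (\<Sum>j\<le>n. monom ((-1) ^ j * int (n choose j)
      * int (pochhammer (a + j + 1) (n - j))) j)) m = coeff (smult (fact n) (laguerre n (int a))) m"
  proof (cases "m \<le> n")
    case True
    have "(\<Prod>i\<in>{m+1..n}. (of_int (int i + int a) :: rat)) = of_nat (\<Prod>i\<in>{m+1..n}. a + i)"
      by (simp add: add.commute)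
    also have "\<dots> = of_nat (pochhammer (a + m + 1) (n - m))"
      using prod_atLeastAtMost_eq_pochhammer[OF True] by simp
    finally show ?thesis
      using True binomial_fact[OF True, where 'a = rat]
      by (simp add: coeff_map_poly coeff_sum laguerre_def field_simps)
  qed (simp add: coeff_map_poly coeff_sum laguerre_def)
qed

lemma fna_no_factor_of_degree:
  fixes a n k p :: nat and c :: "nat \<Rightarrow> int"
  assumes p: "prime p" and k: "1 \<le> k" "2 * k \<le> n" "k + 2 \<le> p"
    and top: "p dvd (\<Prod>i=1..k. a + n - k + i)" and c: "\<not> int p dvd c 0 * c n"
    and bottom: "\<not> p dvd (\<Prod>i=1..k. a + i)" and cond: "prime_bound_condition p k a"
  shows "\<not> (\<exists>g. degree g = k \<and> g dvd fna n a c)"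
proof
  assume "\<exists>g. degree g = k \<and> g dvd fna n a c"
  then obtain g where g: "degree g = k" "g dvd fna n a c"
    by blast
  obtain d G H where "d \<noteq> 0"
    and GH: "G * H = smult d (\<Sum>j\<le>n. monom (c j * int (pochhammer (a + j + 1) (n - j))) j)"
    and "degree G = k"
    using int_factors_of_rat_factor[OF fna_eq_scaled_int_poly _ g(2)] g(1) by auto
  obtain i0 where i0: "i0 \<in> {1..k}" "p dvd a + n - k + i0"
    using top p by (auto simp: prime_dvd_prod_iff)
  have "int p dvd c j * int (pochhammer (a + j + 1) (n - j))" if "j \<le> n - k" for j
  proof -
    have "a + n - k + i0 dvd pochhammer (a + j + 1) (n - j)"
      using that i0(1) k by (intro dvd_pochhammer_of_mem) auto
    then show ?thesis
      using i0(2) by (simp add: int_dvd_int_iff dvd_trans)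
  qed
  moreover have "\<forall>i\<in>{1..k}. \<not> p dvd a + i"
    using bottom by (meson dvd_prodI dvd_trans finite_atLeastAtMost)
  moreover have "\<not> int p dvd c 0" "\<not> int p dvd c n"
    using c by (auto simp: dvd_mult dvd_mult2)
  ultimately have "degree G \<noteq> k"
    using k by (intro no_factor_of_degree_pochhammer_coeffs[OF p k(1) _ k(3) _ cond _ _ _ GH \<open>d \<noteq> 0\<close>])
      auto
  then show False
    using \<open>degree G = k\<close> ..
qed

lemma laguerre_no_factor_of_degree:
  fixes a n k p :: nat
  assumes p: "prime p" and k: "1 \<le> k" "2 * k \<le> n" "k + 2 \<le> p"
    and top: "p dvd (\<Prod>i=1..k. (n - k + i) * (a + n - k + i))"
    and bottom: "\<not> p dvd (\<Prod>i=1..k. a + i)" and cond: "prime_bound_condition p k a"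
  shows "\<not> (\<exists>g. degree g = k \<and> g dvd laguerre n (int a))"
proof
  define e where "e = (\<lambda>j. (-1) ^ j * int (n choose j) :: int)"
  assume "\<exists>g. degree g = k \<and> g dvd laguerre n (int a)"
  then obtain g where g: "degree g = k" "g dvd laguerre n (int a)"
    by blast
  obtain d G H where "d \<noteq> 0"
    and GH: "G * H = smult d (\<Sum>j\<le>n. monom (e j * int (pochhammer (a + j + 1) (n - j))) j)"
    and "degree G = k"
    using int_factors_of_rat_factor[OF laguerre_eq_scaled_int_poly _ g(2)] g(1) by (auto simp: e_def)
  obtain i0 where i0: "i0 \<in> {1..k}" "p dvd (n - k + i0) * (a + n - k + i0)"
    using top p by (auto simp: prime_dvd_prod_iff)
  have "int p dvd e j * int (pochhammer (a + j + 1) (n - j))" if "j \<le> n - k" for j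
  proof -
    have "p dvd (n choose j) * pochhammer (a + j + 1) (n - j)"
    proof (cases "p dvd a + n - k + i0")
      case True
      moreover have "a + n - k + i0 dvd pochhammer (a + j + 1) (n - j)"
        using that i0(1) k by (intro dvd_pochhammer_of_mem) auto
      ultimately show ?thesis
        by (simp add: dvd_trans)
    next
      case False
      then have "p dvd n - k + i0"
        using i0(2) p by (simp add: prime_dvd_mult_iff)
      moreover have "n - k + i0 dvd pochhammer (j + 1) (n - j)"
        using that i0(1) k by (intro dvd_pochhammer_of_mem) auto
      ultimately have "p dvd pochhammer (j + 1) (n - j) * ((n + a) choose (n - j))"
        by (meson dvd_trans dvd_mult2)
      then show ?thesis
        using binomial_mult_pochhammer[of j n a] that k by simp
    qed
    then have "int p dvd int (n choose j) * int (pochhammer (a + j + 1) (n - j))"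
      by (simp only: int_dvd_int_iff of_nat_mult[symmetric])
    then show ?thesis
      by (simp add: e_def mult.assoc)
  qed
  moreover have "\<forall>i\<in>{1..k}. \<not> p dvd a + i"
    using bottom by (meson dvd_prodI dvd_trans finite_atLeastAtMost)
  moreover have "\<not> int p dvd e n"
  proof
    assume "int p dvd e n"
    then have "is_unit (int p)"
      by (rule dvd_unit_imp_unit) (simp add: e_def is_unit_power_iff)
    then show False
      using prime_gt_1_nat[OF p] by simp
  qed
  moreover have "\<not> int p dvd e 0"
    using prime_gt_1_nat[OF p] by (simp add: e_def)
  ultimately have "degree G \<noteq> k"
    using k by (intro no_factor_of_degree_pochhammer_coeffs[OF p k(1) _ k(3) _ cond _ _ _ GH \<open>d \<noteq> 0\<close>])
      auto
  then show False
    using \<open>degree G = k\<close> ..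
qed

theorem lemma1p1:
  fixes a n k :: nat and c :: "nat \<Rightarrow> int"
  assumes "a > 0" and "1 \<le> k" and "2 * k \<le> n"
  shows "((\<exists>p::nat. prime p \<and> p \<ge> k + 2
            \<and> p dvd (\<Prod>i=1..k. a + n - k + i)
            \<and> \<not> int p dvd (c 0 * c n)
            \<and> \<not> p dvd (\<Prod>i=1..k. a + i)
            \<and> (real p \<ge> min (2 * (real a / real k)) (real k + real a / real k)
               \<or> (p > 2 * k \<and> p ^ 2 - p \<ge> a)))
          \<longrightarrow> \<not> (\<exists>g :: rat poly. degree g = k \<and> g dvd fna n a c))
       \<and> ((\<exists>p::nat. prime p \<and> p \<ge> k + 2
            \<and> p dvd (\<Prod>i=1..k. (n - k + i) * (a + n - k + i))
            \<and> \<not> p dvd (\<Prod>i=1..k. a + i)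
            \<and> (real p \<ge> min (2 * (real a / real k)) (real k + real a / real k)
               \<or> (p > 2 * k \<and> p ^ 2 - p \<ge> a)))
          \<longrightarrow> \<not> (\<exists>g :: rat poly. degree g = k \<and> g dvd laguerre n (int a)))"
  using fna_no_factor_of_degree[OF _ assms(2,3)] laguerre_no_factor_of_degree[OF _ assms(2,3)]
    prime_bound_conditionI[OF assms(2)]
  by blast

end
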